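(* Let $\tau>0$ and let $u^n=(\mathbf E^n,\mathbf H^n)$, $n=0,\dots,N$, be $\mathbb V$-valued random variables satisfying, in the sense of distributions, the midpoint scheme $$\varepsilon\mathbf E^{n+1}=\varepsilon\mathbf E^n+\tfrac\tau2(\nabla\times\mathbf H^n+\nabla\times\mathbf H^{n+1})-\Delta W_e^{n+1},\qquad \mu\mathbf H^{n+1}=\mu\mathbf H^n-\tfrac\tau2(\nabla\times\mathbf E^n+\nabla\times\mathbf E^{n+1})-\Delta W_m^{n+1},$$ where $\Delta W_e^{n+1}=W_e(t_{n+1})-W_e(t_n)$, $\Delta W_m^{n+1}=W_m(t_{n+1})-W_m(t_n)$, $t_n=n\tau$. If $Qh\in\mathbb V_0$ for every $h\in\mathbb V$, then for every $n=0,\dots,N-1$, almost surely $$\nabla\cdot(\varepsilon\mathbf E^{n+1})=\nabla\cdot(\varepsilon\mathbf E^n),\qquad\nabla\cdot(\mu\mathbf H^{n+1})=\nabla\cdot(\mu\mathbf H^n).$$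
   Context: $D\subset\mathbb R^3$ is a cuboid with outer unit normal $\mathbf n$; $\varepsilon,\mu\in L^\infty(D)$ with $\varepsilon,\mu\ge\delta>0$. $\mathbb V=L^2(D)^3\times L^2(D)^3$ with inner product $\int_D(\varepsilon\mathbf E_1\cdot\mathbf E_2+\mu\mathbf H_1\cdot\mathbf H_2)\,\mathrm d\mathbf x$, and $\mathbb V_0=\{(\mathbf E,\mathbf H)\in\mathbb V:\nabla\cdot(\varepsilon\mathbf E)=0,\ \nabla\cdot(\mu\mathbf H)=0,\ \mathbf n\cdot(\mu\mathbf H)=0\text{ on }\partial D\}$. $W_e,W_m$ are independent $Q_e$-, $Q_m$-Wiener processes on $L^2(D)^3$ ($Q_e,Q_m$ symmetric positive definite trace-class), and $W=(\varepsilon^{-1}W_e,\mu^{-1}W_m)$ is a $Q$-Wiener process on $\mathbb V$ with $Q=\mathrm{diag}(\varepsilon^{-1}Q_e,\mu^{-1}Q_m)$. Divergences are taken in the sense of distributions. *)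

theory Defs
  imports "HOL-Probability.Probability"
begin

text \<open>Vector fields on R^3 (representatives of elements of L^2(D)^3) and scalar fields.\<close>
type_synonym vfield = "real^3 \<Rightarrow> real^3"
type_synonym sfield = "real^3 \<Rightarrow> real"

definition L2 :: "(real^3) set \<Rightarrow> vfield \<Rightarrow> bool" where
  "L2 D f \<longleftrightarrow> (\<lambda>x. indicator D x *\<^sub>R f x) \<in> borel_measurable lborel
     \<and> set_integrable lborel D (\<lambda>x. (norm (f x))\<^sup>2)"

definition L2s :: "(real^3) set \<Rightarrow> sfield \<Rightarrow> bool" where
  "L2s D f \<longleftrightarrow> (\<lambda>x. indicator D x * f x) \<in> borel_measurable lborel
     \<and> set_integrable lborel D (\<lambda>x. (f x)\<^sup>2)"

definition l2inner :: "(real^3) set \<Rightarrow> vfield \<Rightarrow> vfield \<Rightarrow> real" where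
  "l2inner D f g = set_lebesgue_integral lborel D (\<lambda>x. f x \<bullet> g x)"

definition l2norm :: "(real^3) set \<Rightarrow> vfield \<Rightarrow> real" where
  "l2norm D f = sqrt (l2inner D f f)"

definition fminus :: "vfield \<Rightarrow> vfield \<Rightarrow> vfield" where
  "fminus f g = (\<lambda>x. f x - g x)"

definition fscale :: "sfield \<Rightarrow> vfield \<Rightarrow> vfield" where
  "fscale c f = (\<lambda>x. c x *\<^sub>R f x)"

definition partial :: "3 \<Rightarrow> sfield \<Rightarrow> sfield" where
  "partial i f x = frechet_derivative f (at x) (axis i 1)"

coinductive smooth :: "sfield \<Rightarrow> bool" where
  "(\<forall>x. f differentiable (at x)) \<Longrightarrow> (\<forall>i. smooth (partial i f)) \<Longrightarrow> smooth f"

definition test_fun :: "(real^3) set \<Rightarrow> sfield \<Rightarrow> bool" where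
  "test_fun D \<psi> \<longleftrightarrow> smooth \<psi> \<and> compact (closure {x. \<psi> x \<noteq> 0})
     \<and> closure {x. \<psi> x \<noteq> 0} \<subseteq> D"

definition test_vfield :: "(real^3) set \<Rightarrow> vfield \<Rightarrow> bool" where
  "test_vfield D \<phi> \<longleftrightarrow> (\<forall>j. test_fun D (\<lambda>x. \<phi> x $ j))"

definition grad :: "sfield \<Rightarrow> vfield" where
  "grad \<psi> x = (\<chi> i. partial i \<psi> x)"

definition curl :: "vfield \<Rightarrow> vfield" where
  "curl \<phi> x = vector
     [partial 2 (\<lambda>y. \<phi> y $ 3) x - partial 3 (\<lambda>y. \<phi> y $ 2) x,
      partial 3 (\<lambda>y. \<phi> y $ 1) x - partial 1 (\<lambda>y. \<phi> y $ 3) x,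
      partial 1 (\<lambda>y. \<phi> y $ 2) x - partial 2 (\<lambda>y. \<phi> y $ 1) x]"

text \<open>Distributional divergence of an L^2 field F on D: the distribution
  psi \<mapsto> - \<integral>_D F \<cdot> grad psi on test functions (set to 0 off test functions).\<close>
definition div_distr :: "(real^3) set \<Rightarrow> vfield \<Rightarrow> sfield \<Rightarrow> real" where
  "div_distr D F \<psi> = (if test_fun D \<psi> then - l2inner D F (grad \<psi>) else 0)"

text \<open>Vanishing normal trace n \<cdot> F = 0 on the boundary, in the H(div) sense via Green's formula:
  div F is an L^2 function d, and \<integral>_D F \<cdot> grad psi + \<integral>_D d psi = 0 for all psi smooth up to the boundary.\<close>
definition normal_trace_zero :: "(real^3) set \<Rightarrow> vfield \<Rightarrow> bool" where
  "normal_trace_zero D F \<longleftrightarrow> (\<exists>d. L2s D d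
      \<and> (\<forall>\<psi>. test_fun D \<psi> \<longrightarrow> div_distr D F \<psi> = set_lebesgue_integral lborel D (\<lambda>x. d x * \<psi> x))
      \<and> (\<forall>\<psi>. smooth \<psi> \<longrightarrow>
           l2inner D F (grad \<psi>) + set_lebesgue_integral lborel D (\<lambda>x. d x * \<psi> x) = 0))"

definition coefficient :: "(real^3) set \<Rightarrow> real \<Rightarrow> sfield \<Rightarrow> bool" where
  "coefficient D \<delta> c \<longleftrightarrow> c \<in> borel_measurable lborel
     \<and> (\<exists>C. AE x in lborel. x \<in> D \<longrightarrow> \<delta> \<le> c x \<and> c x \<le> C)"

definition inV :: "(real^3) set \<Rightarrow> vfield \<times> vfield \<Rightarrow> bool" where
  "inV D u \<longleftrightarrow> L2 D (fst u) \<and> L2 D (snd u)"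

definition inV0 :: "(real^3) set \<Rightarrow> sfield \<Rightarrow> sfield \<Rightarrow> vfield \<times> vfield \<Rightarrow> bool" where
  "inV0 D \<epsilon> \<mu> u \<longleftrightarrow> inV D u
     \<and> (\<forall>\<psi>. div_distr D (fscale \<epsilon> (fst u)) \<psi> = 0)
     \<and> (\<forall>\<psi>. div_distr D (fscale \<mu> (snd u)) \<psi> = 0)
     \<and> normal_trace_zero D (fscale \<mu> (snd u))"

definition Qop :: "sfield \<Rightarrow> sfield \<Rightarrow> (vfield \<Rightarrow> vfield) \<Rightarrow> (vfield \<Rightarrow> vfield)
     \<Rightarrow> vfield \<times> vfield \<Rightarrow> vfield \<times> vfield" where
  "Qop \<epsilon> \<mu> Qe Qm u = (fscale (\<lambda>x. 1 / \<epsilon> x) (Qe (fst u)), fscale (\<lambda>x. 1 / \<mu> x) (Qm (snd u)))"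

definition l2_onb :: "(real^3) set \<Rightarrow> (nat \<Rightarrow> vfield) \<Rightarrow> bool" where
  "l2_onb D e \<longleftrightarrow> (\<forall>k. L2 D (e k))
     \<and> (\<forall>k l. l2inner D (e k) (e l) = (if k = l then 1 else 0))
     \<and> (\<forall>f. L2 D f \<longrightarrow>
          (\<lambda>n. l2norm D (fminus f (\<lambda>x. \<Sum>k<n. l2inner D f (e k) *\<^sub>R e k x))) \<longlonglongrightarrow> 0)"

text \<open>Symmetric, nonnegative, trace-class linear operator on L^2(D)^3 (acting on representatives,
  compatible with a.e. equality).\<close>
definition covariance_op :: "(real^3) set \<Rightarrow> (vfield \<Rightarrow> vfield) \<Rightarrow> bool" where
  "covariance_op D Q \<longleftrightarrow>
     (\<forall>f. L2 D f \<longrightarrow> L2 D (Q f))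
   \<and> (\<forall>f g. L2 D f \<longrightarrow> L2 D g \<longrightarrow> l2norm D (fminus f g) = 0 \<longrightarrow> l2norm D (fminus (Q f) (Q g)) = 0)
   \<and> (\<forall>a b f g. L2 D f \<longrightarrow> L2 D g \<longrightarrow>
        l2norm D (fminus (Q (\<lambda>x. a *\<^sub>R f x + b *\<^sub>R g x)) (\<lambda>x. a *\<^sub>R Q f x + b *\<^sub>R Q g x)) = 0)
   \<and> (\<forall>f g. L2 D f \<longrightarrow> L2 D g \<longrightarrow> l2inner D (Q f) g = l2inner D f (Q g))
   \<and> (\<forall>f. L2 D f \<longrightarrow> 0 \<le> l2inner D (Q f) f)
   \<and> (\<exists>e. l2_onb D e \<and> summable (\<lambda>k. l2inner D (Q (e k)) (e k)))"

definition centered_gaussian :: "'w measure \<Rightarrow> ('w \<Rightarrow> real) \<Rightarrow> real \<Rightarrow> bool" where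
  "centered_gaussian M X v \<longleftrightarrow> X \<in> borel_measurable M \<and>
     (if v = 0 then (AE \<omega> in M. X \<omega> = 0) else distributed M lborel X (normal_density 0 (sqrt v)))"

text \<open>Q-Wiener process on L^2(D)^3 (Da Prato--Zabczyk): W(0) = 0, continuous paths,
  W(t)-W(s) ~ N(0,(t-s)Q) (Gaussian measure on the Hilbert space, characterised by its
  one-dimensional projections), independent increments (w.r.t. the cylinder = Borel sigma algebra).\<close>
definition qwiener :: "(real^3) set \<Rightarrow> 'w measure \<Rightarrow> (vfield \<Rightarrow> vfield) \<Rightarrow> (real \<Rightarrow> 'w \<Rightarrow> vfield) \<Rightarrow> bool" where
  "qwiener D M Q W \<longleftrightarrow>
     (\<forall>t\<ge>0. \<forall>\<omega>\<in>space M. L2 D (W t \<omega>))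
   \<and> (AE \<omega> in M. l2norm D (W 0 \<omega>) = 0)
   \<and> (AE \<omega> in M. \<forall>t\<ge>0. ((\<lambda>s. l2norm D (fminus (W s \<omega>) (W t \<omega>))) \<longlongrightarrow> 0) (at t within {0..}))
   \<and> (\<forall>s t h. 0 \<le> s \<longrightarrow> s \<le> t \<longrightarrow> L2 D h \<longrightarrow>
        centered_gaussian M (\<lambda>\<omega>. l2inner D (fminus (W t \<omega>) (W s \<omega>)) h) ((t - s) * l2inner D (Q h) h))
   \<and> (\<forall>(k::nat) (t::nat \<Rightarrow> real) (h::nat \<Rightarrow> nat \<Rightarrow> vfield).
        0 \<le> t 0 \<longrightarrow> (\<forall>j<k. t j < t (Suc j)) \<longrightarrow> (\<forall>j l. L2 D (h j l)) \<longrightarrow>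
        prob_space.indep_vars M (\<lambda>_. Pi\<^sub>M UNIV (\<lambda>_. borel))
          (\<lambda>j \<omega>. (\<lambda>l. l2inner D (fminus (W (t (Suc j)) \<omega>) (W (t j) \<omega>)) (h j l))) {..<k})"

text \<open>Independence of two processes (sigma algebras generated by all projections at countably many times).\<close>
definition indep_processes :: "(real^3) set \<Rightarrow> 'w measure \<Rightarrow> (real \<Rightarrow> 'w \<Rightarrow> vfield) \<Rightarrow> (real \<Rightarrow> 'w \<Rightarrow> vfield) \<Rightarrow> bool" where
  "indep_processes D M W1 W2 \<longleftrightarrow>
     (\<forall>(t::nat \<Rightarrow> real) (s::nat \<Rightarrow> real) (h::nat \<Rightarrow> vfield) (g::nat \<Rightarrow> vfield).
        (\<forall>i. 0 \<le> t i \<and> 0 \<le> s i \<and> L2 D (h i) \<and> L2 D (g i)) \<longrightarrow>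
        prob_space.indep_var M (Pi\<^sub>M UNIV (\<lambda>_. borel)) (\<lambda>\<omega>. (\<lambda>i. l2inner D (W1 (t i) \<omega>) (h i)))
                               (Pi\<^sub>M UNIV (\<lambda>_. borel)) (\<lambda>\<omega>. (\<lambda>i. l2inner D (W2 (s i) \<omega>) (g i))))"

text \<open>L^2(D)^3-valued random variable (weakly measurable = Borel measurable, L^2 separable).\<close>
definition random_field :: "(real^3) set \<Rightarrow> 'w measure \<Rightarrow> ('w \<Rightarrow> vfield) \<Rightarrow> bool" where
  "random_field D M F \<longleftrightarrow> (\<forall>\<omega>\<in>space M. L2 D (F \<omega>))
     \<and> (\<forall>h. L2 D h \<longrightarrow> (\<lambda>\<omega>. l2inner D (F \<omega>) h) \<in> borel_measurable M)"

text \<open>eps E1 = eps E0 + tau/2 (curl H0 + curl H1) - dWe,  mu H1 = mu H0 - tau/2 (curl E0 + curl E1) - dWm,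
  tested against vector test functions phi (distributional curl: <curl H, phi> = \<integral> H \<cdot> curl phi).\<close>
definition midpoint_step :: "(real^3) set \<Rightarrow> sfield \<Rightarrow> sfield \<Rightarrow> real
    \<Rightarrow> vfield \<Rightarrow> vfield \<Rightarrow> vfield \<Rightarrow> vfield \<Rightarrow> vfield \<Rightarrow> vfield \<Rightarrow> bool" where
  "midpoint_step D \<epsilon> \<mu> \<tau> E0 H0 E1 H1 dWe dWm \<longleftrightarrow>
     (\<forall>\<phi>. test_vfield D \<phi> \<longrightarrow>
        l2inner D (fscale \<epsilon> E1) \<phi> = l2inner D (fscale \<epsilon> E0) \<phi>
          + \<tau> / 2 * (l2inner D H0 (curl \<phi>) + l2inner D H1 (curl \<phi>)) - l2inner D dWe \<phi>
      \<and> l2inner D (fscale \<mu> H1) \<phi> = l2inner D (fscale \<mu> H0) \<phi>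
          - \<tau> / 2 * (l2inner D E0 (curl \<phi>) + l2inner D E1 (curl \<phi>)) - l2inner D dWm \<phi>)"

end

theory Submission
  imports Defs
begin

text \<open>Testing the scheme against a gradient field \<open>\<nabla>\<psi>\<close> annihilates both curl terms, since
  \<open>curl \<nabla>\<psi> = 0\<close> by the symmetry of second derivatives. Hence the distributional divergences of
  \<open>\<epsilon>E\<close> and \<open>\<mu>H\<close> change in one step exactly by \<open>\<langle>\<Delta>W\<^sub>e, \<nabla>\<psi>\<rangle>\<close> and \<open>\<langle>\<Delta>W\<^sub>m, \<nabla>\<psi>\<rangle>\<close>.
  For fixed \<open>\<psi>\<close> these are centred Gaussians with variances \<open>\<tau>\<langle>Q\<^sub>e\<nabla>\<psi>, \<nabla>\<psi>\<rangle>\<close> and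
  \<open>\<tau>\<langle>Q\<^sub>m\<nabla>\<psi>, \<nabla>\<psi>\<rangle>\<close>, which vanish because \<open>Q\<close> takes values in divergence-free fields;
  so they are zero almost surely. The exceptional null set is made independent of \<open>\<psi>\<close> by
  passing to a countable family of gradients that is \<open>L\<^sup>2\<close>-dense among all gradients, built from
  rational combinations of an orthonormal basis.\<close>

section \<open>Symmetry of second partial derivatives\<close>

lemma has_real_derivative_along_line:
  fixes f :: "'a::real_normed_vector \<Rightarrow> real"
  assumes "f differentiable (at (y + s *\<^sub>R v))"
  shows "((\<lambda>t. f (y + t *\<^sub>R v)) has_real_derivative frechet_derivative f (at (y + s *\<^sub>R v)) v) (at s)"
proof -
  let ?F = "frechet_derivative f (at (y + s *\<^sub>R v))"
  have f: "(f has_derivative ?F) (at (y + s *\<^sub>R v))"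
    using assms frechet_derivative_works by blast
  have "((\<lambda>t. y + t *\<^sub>R v) has_derivative (\<lambda>t. t *\<^sub>R v)) (at s)"
    by (auto intro!: derivative_eq_intros)
  from diff_chain_at[OF this] f
  have "((\<lambda>t. f (y + t *\<^sub>R v)) has_derivative (\<lambda>t. ?F (t *\<^sub>R v))) (at s)"
    by (simp add: o_def)
  moreover have "(\<lambda>t. ?F (t *\<^sub>R v)) = (\<lambda>t. ?F v * t)"
    using linear_scale[OF has_derivative_linear[OF f]] by (simp add: fun_eq_iff)
  ultimately show ?thesis
    unfolding has_field_derivative_def by simp
qed

lemma second_difference_mean_value:
  fixes f :: "'a::real_normed_vector \<Rightarrow> real"
  assumes df: "\<forall>x. f differentiable at x"
    and dP: "\<forall>x. (\<lambda>y. frechet_derivative f (at y) u) differentiable at x"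
    and h: "0 < h"
  obtains \<xi> \<eta> where "0 < \<xi>" "\<xi> < h" "0 < \<eta>" "\<eta> < h"
    "f (x + h *\<^sub>R u + h *\<^sub>R w) - f (x + h *\<^sub>R u) - f (x + h *\<^sub>R w) + f x
       = h * h * frechet_derivative (\<lambda>y. frechet_derivative f (at y) u) (at (x + \<xi> *\<^sub>R u + \<eta> *\<^sub>R w)) w"
proof -
  define P where "P = (\<lambda>y. frechet_derivative f (at y) u)"
  define g where "g = (\<lambda>s. f ((x + h *\<^sub>R w) + s *\<^sub>R u) - f (x + s *\<^sub>R u))"
  have "(g has_real_derivative (P ((x + h *\<^sub>R w) + s *\<^sub>R u) - P (x + s *\<^sub>R u))) (at s)" for s
    unfolding g_def P_def using df by (intro derivative_intros has_real_derivative_along_line) auto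
  then obtain \<xi> where \<xi>: "0 < \<xi>" "\<xi> < h"
    "g h - g 0 = h * (P ((x + h *\<^sub>R w) + \<xi> *\<^sub>R u) - P (x + \<xi> *\<^sub>R u))"
    using MVT2[OF h, of g "\<lambda>s. P ((x + h *\<^sub>R w) + s *\<^sub>R u) - P (x + s *\<^sub>R u)"] by auto
  define k where "k = (\<lambda>t. P ((x + \<xi> *\<^sub>R u) + t *\<^sub>R w))"
  have "(k has_real_derivative frechet_derivative P (at ((x + \<xi> *\<^sub>R u) + t *\<^sub>R w)) w) (at t)" for t
    unfolding k_def using dP P_def by (intro has_real_derivative_along_line) auto
  then obtain \<eta> where \<eta>: "0 < \<eta>" "\<eta> < h"
    "k h - k 0 = h * frechet_derivative P (at ((x + \<xi> *\<^sub>R u) + \<eta> *\<^sub>R w)) w"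
    using MVT2[OF h, of k "\<lambda>t. frechet_derivative P (at ((x + \<xi> *\<^sub>R u) + t *\<^sub>R w)) w"] by auto
  have "k h - k 0 = P ((x + h *\<^sub>R w) + \<xi> *\<^sub>R u) - P (x + \<xi> *\<^sub>R u)"
    unfolding k_def by (simp add: algebra_simps)
  with \<xi>(3) \<eta>(3) have "g h - g 0 = h * h * frechet_derivative P (at (x + \<xi> *\<^sub>R u + \<eta> *\<^sub>R w)) w"
    by simp
  moreover have "g h - g 0 = f (x + h *\<^sub>R u + h *\<^sub>R w) - f (x + h *\<^sub>R u) - f (x + h *\<^sub>R w) + f x"
    unfolding g_def by (simp add: algebra_simps)
  ultimately show ?thesis
    using that[OF \<xi>(1,2) \<eta>(1,2)] by (simp add: P_def)
qed

lemma smoothD: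
  assumes "smooth f"
  shows "f differentiable (at x)" "smooth (partial i f)"
  using assms by (auto elim: smooth.cases)

lemma partial_eq_frechet_derivative: "partial i f = (\<lambda>y. frechet_derivative f (at y) (axis i 1))"
  by (simp add: fun_eq_iff partial_def)

lemma continuous_partial: "smooth f \<Longrightarrow> isCont (partial i f) x"
  by (meson differentiable_imp_continuous_within smoothD)

text \<open>The second difference of \<open>f\<close> along two coordinate directions is symmetric in them;
  applying the mean value theorem twice, in either order, expresses it through \<open>\<partial>\<^sub>i\<partial>\<^sub>j f\<close>
  and through \<open>\<partial>\<^sub>j\<partial>\<^sub>i f\<close> at points near \<open>x\<close>.\<close>

lemma partial_partial_eq_at_nearby_points:
  assumes f: "smooth f" and h: "0 < h"
  obtains p q where "dist p x < 2 * h" "dist q x < 2 * h"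
    "partial i (partial j f) p = partial j (partial i f) q"
proof -
  let ?u = "axis j 1 :: real^3" and ?w = "axis i 1 :: real^3"
  have df: "\<forall>x. f differentiable at x"
    using smoothD(1)[OF f] by blast
  have dP: "\<forall>x. (\<lambda>y. frechet_derivative f (at y) (axis k 1)) differentiable at x" for k
    using smoothD(1)[OF smoothD(2)[OF f, of k]] by (simp add: partial_eq_frechet_derivative)
  obtain a b where ab: "0 < a" "a < h" "0 < b" "b < h"
    "f (x + h *\<^sub>R ?u + h *\<^sub>R ?w) - f (x + h *\<^sub>R ?u) - f (x + h *\<^sub>R ?w) + f x
       = h * h * partial i (partial j f) (x + a *\<^sub>R ?u + b *\<^sub>R ?w)"
    using second_difference_mean_value[OF df dP[of j] h, of x ?w]
    by (auto simp: partial_eq_frechet_derivative)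
  obtain c d where cd: "0 < c" "c < h" "0 < d" "d < h"
    "f (x + h *\<^sub>R ?w + h *\<^sub>R ?u) - f (x + h *\<^sub>R ?w) - f (x + h *\<^sub>R ?u) + f x
       = h * h * partial j (partial i f) (x + c *\<^sub>R ?w + d *\<^sub>R ?u)"
    using second_difference_mean_value[OF df dP[of i] h, of x ?u]
    by (auto simp: partial_eq_frechet_derivative)
  have eq: "partial i (partial j f) (x + a *\<^sub>R ?u + b *\<^sub>R ?w) = partial j (partial i f) (x + c *\<^sub>R ?w + d *\<^sub>R ?u)"
    using ab(5) cd(5) h by (simp add: algebra_simps)
  have close: "dist (x + s *\<^sub>R v + t *\<^sub>R v') x < 2 * h"
    if "0 < s" "s < h" "0 < t" "t < h" "norm v = 1" "norm v' = 1" for s t and v v' :: "real^3"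
    using norm_triangle_ineq[of "s *\<^sub>R v" "t *\<^sub>R v'"] that by (simp add: dist_norm)
  show ?thesis
    using close[OF ab(1-4) norm_axis_1 norm_axis_1] close[OF cd(1-4) norm_axis_1 norm_axis_1] eq
    by (rule that)
qed

lemma partial_commute:
  assumes f: "smooth f"
  shows "partial i (partial j f) x = partial j (partial i f) x"
proof -
  let ?Dij = "partial i (partial j f)" and ?Dji = "partial j (partial i f)"
  have "dist (?Dij x) (?Dji x) < 2 * e" if e: "0 < e" for e
  proof -
    obtain d1 where d1: "0 < d1" "\<And>y. dist y x < d1 \<Longrightarrow> dist (?Dij y) (?Dij x) < e"
      using continuous_partial[OF smoothD(2)[OF f]] e unfolding continuous_at_eps_delta by metis
    obtain d2 where d2: "0 < d2" "\<And>y. dist y x < d2 \<Longrightarrow> dist (?Dji y) (?Dji x) < e"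
      using continuous_partial[OF smoothD(2)[OF f]] e unfolding continuous_at_eps_delta by metis
    obtain p q where "dist p x < min d1 d2" "dist q x < min d1 d2" "?Dij p = ?Dji q"
      using partial_partial_eq_at_nearby_points[OF f, of "min d1 d2 / 2" x i j] d1 d2 by auto
    then show ?thesis
      using d1(2)[of p] d2(2)[of q] dist_triangle3[of "?Dij x" "?Dji x" "?Dij p"] by (simp add: dist_commute)
  qed
  from this[of "dist (?Dij x) (?Dji x) / 2"] show ?thesis
    by (cases "?Dij x = ?Dji x") auto
qed

section \<open>Test functions and gradients\<close>

lemma closure_support_partial_subset:
  assumes "smooth f"
  shows "closure {x. partial i f x \<noteq> 0} \<subseteq> closure {x. f x \<noteq> 0}"
proof (rule closure_minimal)
  show "{x. partial i f x \<noteq> 0} \<subseteq> closure {x. f x \<noteq> 0}"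
  proof (rule subsetI, rule ccontr)
    fix x assume x: "x \<in> {x. partial i f x \<noteq> 0}" "x \<notin> closure {x. f x \<noteq> 0}"
    have "frechet_derivative f (at x) = frechet_derivative (\<lambda>_. 0::real) (at x)"
      using smoothD(1)[OF assms] x closure_subset[of "{x. f x \<noteq> 0}"]
      by (intro frechet_derivative_transform_within_open[of _ _ "- closure {x. f x \<noteq> 0}"]) auto
    with x show False by (simp add: partial_def)
  qed
qed simp

lemma test_fun_partial:
  assumes "test_fun D f"
  shows "test_fun D (partial i f)"
proof -
  have f: "smooth f" using assms test_fun_def by blast
  have sub: "closure {x. partial i f x \<noteq> 0} \<subseteq> closure {x. f x \<noteq> 0}"
    by (rule closure_support_partial_subset[OF f])
  then have "compact (closure {x. partial i f x \<noteq> 0})"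
    using assms unfolding test_fun_def by (metis closed_closure compact_Int_closed inf.absorb_iff2)
  with assms sub smoothD(2)[OF f] show ?thesis unfolding test_fun_def by blast
qed

lemma test_vfield_grad: "test_fun D \<psi> \<Longrightarrow> test_vfield D (grad \<psi>)"
  by (simp add: test_vfield_def grad_def test_fun_partial)

lemma curl_grad_eq_0:
  assumes "smooth \<psi>"
  shows "curl (grad \<psi>) = (\<lambda>x. 0)"
proof -
  have "(\<lambda>y. grad \<psi> y $ i) = partial i \<psi>" for i by (simp add: grad_def fun_eq_iff)
  then show ?thesis
    by (simp add: curl_def partial_commute[OF assms] fun_eq_iff vec_eq_iff vector_def forall_3)
qed

lemma L2_grad:
  assumes \<psi>: "test_fun D \<psi>" and D: "D \<in> sets lborel" "bounded D"
  shows "L2 D (grad \<psi>)"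
proof -
  have "continuous_on UNIV (partial i \<psi>)" for i
    using \<psi> unfolding test_fun_def by (intro continuous_at_imp_continuous_on ballI continuous_partial) simp
  then have cont: "continuous_on UNIV (grad \<psi>)"
    unfolding grad_def[abs_def] by (rule continuous_on_vec_lambda)
  then have "(\<lambda>x. indicator D x *\<^sub>R grad \<psi> x) \<in> borel_measurable lborel"
    using D(1) borel_measurable_continuous_onI[OF cont]
    by (intro borel_measurable_scaleR borel_measurable_indicator) auto
  moreover have "continuous_on UNIV (\<lambda>x. (norm (grad \<psi> x))\<^sup>2)"
    using cont by (intro continuous_intros)
  then have "set_integrable lborel (closure D) (\<lambda>x. (norm (grad \<psi> x))\<^sup>2)"
    unfolding set_integrable_def using D(2)
    by (intro borel_integrable_compact) (auto intro: continuous_on_subset)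
  then have "set_integrable lborel D (\<lambda>x. (norm (grad \<psi> x))\<^sup>2)"
    by (rule set_integrable_subset) (use D(1) closure_subset in auto)
  ultimately show ?thesis unfolding L2_def by blast
qed

section \<open>Square-integrable fields\<close>

lemma norm_add_squared_le:
  fixes u v :: "'a::real_normed_vector"
  shows "(norm (u + v))\<^sup>2 \<le> 2 * (norm u)\<^sup>2 + 2 * (norm v)\<^sup>2"
proof -
  have "(norm (u + v))\<^sup>2 \<le> (norm u + norm v)\<^sup>2"
    by (simp add: norm_triangle_ineq power_mono)
  also have "\<dots> \<le> 2 * (norm u)\<^sup>2 + 2 * (norm v)\<^sup>2"
    using sum_squares_ge_zero[of "norm u - norm v" 0] by (simp add: power2_eq_square algebra_simps)
  finally show ?thesis .
qed

lemma set_integrable_sum_real: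
  fixes f :: "'i \<Rightarrow> 'a \<Rightarrow> real"
  assumes "finite I" "\<And>i. i \<in> I \<Longrightarrow> set_integrable M A (f i)"
  shows "set_integrable M A (\<lambda>x. \<Sum>i\<in>I. f i x)"
  using assms unfolding set_integrable_def
  by (simp only: scaleR_sum_right) (intro Bochner_Integration.integrable_sum)

lemma set_integral_sum_real:
  fixes f :: "'i \<Rightarrow> 'a \<Rightarrow> real"
  assumes "finite I" "\<And>i. i \<in> I \<Longrightarrow> set_integrable M A (f i)"
  shows "(LINT x:A|M. (\<Sum>i\<in>I. f i x)) = (\<Sum>i\<in>I. LINT x:A|M. f i x)"
  using assms unfolding set_integrable_def set_lebesgue_integral_def
  by (simp only: scaleR_sum_right) (intro Bochner_Integration.integral_sum)

lemma L2_zero: "L2 D (\<lambda>x. 0)"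
  by (simp add: L2_def set_integrable_def)

lemma L2_scaleR_add:
  assumes D: "D \<in> sets lborel" and f: "L2 D f" and g: "L2 D g"
  shows "L2 D (\<lambda>x. a *\<^sub>R f x + b *\<^sub>R g x)"
proof -
  let ?F = "\<lambda>x. indicator D x *\<^sub>R f x" and ?G = "\<lambda>x. indicator D x *\<^sub>R g x"
  have eq: "(\<lambda>x. indicator D x *\<^sub>R (a *\<^sub>R f x + b *\<^sub>R g x)) = (\<lambda>x. a *\<^sub>R ?F x + b *\<^sub>R ?G x)"
    by (auto simp: fun_eq_iff algebra_simps)
  have m: "(\<lambda>x. indicator D x *\<^sub>R (a *\<^sub>R f x + b *\<^sub>R g x)) \<in> borel_measurable lborel"
    unfolding eq
    by (rule borel_measurable_add; rule borel_measurable_scaleR[OF borel_measurable_const])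
      (use f g in \<open>simp_all add: L2_def\<close>)
  have "(\<lambda>x. indicator D x * (norm (a *\<^sub>R f x + b *\<^sub>R g x))\<^sup>2)
      = (\<lambda>x. (norm (indicator D x *\<^sub>R (a *\<^sub>R f x + b *\<^sub>R g x)))\<^sup>2)"
    by (auto simp: fun_eq_iff indicator_def)
  also have "\<dots> \<in> borel_measurable lborel"
    using m by measurable
  finally have mm: "(\<lambda>x. indicator D x * (norm (a *\<^sub>R f x + b *\<^sub>R g x))\<^sup>2) \<in> borel_measurable lborel" .
  have ib: "integrable lborel (\<lambda>x. 2 * a\<^sup>2 * (indicator D x * (norm (f x))\<^sup>2)
      + 2 * b\<^sup>2 * (indicator D x * (norm (g x))\<^sup>2))"
    using f g unfolding L2_def set_integrable_def by simp
  have pw: "indicator D x * (norm (a *\<^sub>R f x + b *\<^sub>R g x))\<^sup>2 \<le>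
      2 * a\<^sup>2 * (indicator D x * (norm (f x))\<^sup>2) + 2 * b\<^sup>2 * (indicator D x * (norm (g x))\<^sup>2)" for x
    using norm_add_squared_le[of "a *\<^sub>R f x" "b *\<^sub>R g x"]
    by (auto simp: indicator_def power_mult_distrib)
  have "integrable lborel (\<lambda>x. indicator D x * (norm (a *\<^sub>R f x + b *\<^sub>R g x))\<^sup>2)"
    by (rule Bochner_Integration.integrable_bound[OF ib mm]) (intro AE_I2, simp add: pw)
  with m show ?thesis unfolding L2_def set_integrable_def by simp
qed

lemma L2_diff: "D \<in> sets lborel \<Longrightarrow> L2 D f \<Longrightarrow> L2 D g \<Longrightarrow> L2 D (\<lambda>x. f x - g x)"
  using L2_scaleR_add[of D f g 1 "-1"] by simp

lemma L2_sum_scaleR: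
  fixes n :: nat
  assumes "D \<in> sets lborel" "\<And>k. L2 D (e k)"
  shows "L2 D (\<lambda>x. \<Sum>k<n. c k *\<^sub>R e k x)"
proof (induction n)
  case (Suc n)
  then show ?case
    using L2_scaleR_add[OF assms(1) _ assms(2), of "\<lambda>x. \<Sum>k<n. c k *\<^sub>R e k x" 1 "c n"]
    by (simp add: add.commute)
qed (simp add: L2_zero)

lemma set_integrable_inner_L2:
  assumes f: "L2 D f" and g: "L2 D g"
  shows "set_integrable lborel D (\<lambda>x. f x \<bullet> g x)"
proof -
  have "(\<lambda>x. indicator D x *\<^sub>R (f x \<bullet> g x)) = (\<lambda>x. (indicator D x *\<^sub>R f x) \<bullet> (indicator D x *\<^sub>R g x))"
    by (auto simp: fun_eq_iff indicator_def)
  also have "\<dots> \<in> borel_measurable lborel"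
    by (rule borel_measurable_inner) (use f g in \<open>simp_all add: L2_def\<close>)
  finally have m: "(\<lambda>x. indicator D x *\<^sub>R (f x \<bullet> g x)) \<in> borel_measurable lborel" .
  have ib: "integrable lborel (\<lambda>x. indicator D x * (norm (f x))\<^sup>2 + indicator D x * (norm (g x))\<^sup>2)"
    using f g unfolding L2_def set_integrable_def by simp
  have "\<bar>f x \<bullet> g x\<bar> \<le> (norm (f x))\<^sup>2 + (norm (g x))\<^sup>2" for x
  proof -
    have "\<bar>f x \<bullet> g x\<bar> \<le> norm (f x) * norm (g x)" by (rule Cauchy_Schwarz_ineq2)
    also have "\<dots> \<le> (norm (f x))\<^sup>2 + (norm (g x))\<^sup>2"
      using sum_squares_ge_zero[of "norm (f x) - norm (g x)" 0]
      by (simp add: power2_eq_square algebra_simps) (smt (verit) mult_nonneg_nonneg norm_ge_zero)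
    finally show ?thesis .
  qed
  then have pw: "\<bar>indicator D x * (f x \<bullet> g x)\<bar> \<le> indicator D x * (norm (f x))\<^sup>2 + indicator D x * (norm (g x))\<^sup>2" for x
    by (auto simp: indicator_def)
  show ?thesis
    unfolding set_integrable_def
    by (rule Bochner_Integration.integrable_bound[OF ib m]) (intro AE_I2, simp add: pw)
qed

lemma l2inner_diff_right:
  assumes "L2 D f" "L2 D g" "L2 D h"
  shows "l2inner D f (\<lambda>x. g x - h x) = l2inner D f g - l2inner D f h"
  unfolding l2inner_def using set_integrable_inner_L2[OF assms(1,2)] set_integrable_inner_L2[OF assms(1,3)]
  by (simp add: inner_diff_right)

lemma l2inner_self: "l2inner D f f = (LINT x:D|lborel. (norm (f x))\<^sup>2)"
  by (simp add: l2inner_def dot_square_norm)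

lemma l2inner_self_nonneg: "0 \<le> l2inner D f f"
  unfolding l2inner_self set_lebesgue_integral_def by (intro integral_nonneg_AE) auto

definition l2dist_sq :: "(real^3) set \<Rightarrow> vfield \<Rightarrow> vfield \<Rightarrow> real" where
  "l2dist_sq D f g = l2inner D (\<lambda>x. f x - g x) (\<lambda>x. f x - g x)"

lemma l2dist_sq_commute: "l2dist_sq D f g = l2dist_sq D g f"
  by (simp add: l2dist_sq_def l2inner_self norm_minus_commute)

lemma l2dist_sq_triangle:
  assumes D: "D \<in> sets lborel" and L2: "L2 D f" "L2 D g" "L2 D h"
  shows "l2dist_sq D f g \<le> 2 * l2dist_sq D f h + 2 * l2dist_sq D h g"
proof -
  have I: "set_integrable lborel D (\<lambda>x. (norm (u x - v x))\<^sup>2)" if "L2 D u" "L2 D v" for u v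
    using L2_diff[OF D that] L2_def by auto
  have "(LINT x:D|lborel. (norm (f x - g x))\<^sup>2)
      \<le> (LINT x:D|lborel. 2 * (norm (f x - h x))\<^sup>2 + 2 * (norm (h x - g x))\<^sup>2)"
    using norm_add_squared_le[of "f x - h x" "h x - g x" for x] I L2
    by (intro set_integral_mono) auto
  then show ?thesis
    unfolding l2dist_sq_def l2inner_self using I L2 by simp
qed

lemma l2inner_abs_le_Young:
  assumes f: "L2 D f" and d: "L2 D d" and l: "0 < l"
  shows "\<bar>l2inner D f d\<bar> \<le> (l * l2inner D f f + l2inner D d d / l) / 2"
proof -
  let ?R = "\<lambda>x. (l * (norm (f x))\<^sup>2 + (norm (d x))\<^sup>2 / l) / 2"
  have If: "set_integrable lborel D (\<lambda>x. (norm (f x))\<^sup>2)" and Id: "set_integrable lborel D (\<lambda>x. (norm (d x))\<^sup>2)"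
    using f d L2_def by auto
  have IR: "set_integrable lborel D ?R"
    using If Id by (intro set_integral_add set_integrable_divide set_integrable_mult_right) auto
  have "\<bar>f x \<bullet> d x\<bar> \<le> ?R x" for x
  proof -
    have "2 * l * (norm (f x) * norm (d x)) \<le> l\<^sup>2 * (norm (f x))\<^sup>2 + (norm (d x))\<^sup>2"
      using sum_squares_ge_zero[of "l * norm (f x) - norm (d x)" 0]
      by (simp add: power2_eq_square algebra_simps)
    then have "norm (f x) * norm (d x) \<le> ?R x"
      using l by (simp add: field_simps power2_eq_square)
    then show ?thesis
      using Cauchy_Schwarz_ineq2[of "f x" "d x"] by linarith
  qed
  then have "\<bar>l2inner D f d\<bar> \<le> (LINT x:D|lborel. ?R x)"
    using set_integrable_inner_L2[OF f d] IR
    unfolding l2inner_def set_lebesgue_integral_def set_integrable_def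
    by (intro integral_abs_bound_integral) (auto simp: indicator_def)
  also have "\<dots> = (l * l2inner D f f + l2inner D d d / l) / 2"
    unfolding l2inner_self using If Id by simp
  finally show ?thesis .
qed

lemma l2inner_eq_0_if_orthogonal_dense:
  assumes D: "D \<in> sets lborel" and f: "L2 D f" and g: "L2 D g"
    and C: "\<And>c. c \<in> C \<Longrightarrow> L2 D c" "\<And>c. c \<in> C \<Longrightarrow> l2inner D f c = 0"
    and dense: "\<And>\<eta>. 0 < \<eta> \<Longrightarrow> \<exists>c\<in>C. l2dist_sq D g c < \<eta>"
  shows "l2inner D f g = 0"
proof -
  let ?A = "l2inner D f f + 1"
  have A: "0 < ?A" using l2inner_self_nonneg[of D f] by linarith
  have bound: "\<bar>l2inner D f g\<bar> \<le> l * ?A / 2" if l: "0 < l" for l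
  proof -
    obtain c where c: "c \<in> C" "l2dist_sq D g c < l\<^sup>2"
      using dense[of "l\<^sup>2"] l by auto
    have "l2inner D f g = l2inner D f (\<lambda>x. g x - c x)"
      using l2inner_diff_right[OF f g C(1)[OF c(1)]] C(2)[OF c(1)] by simp
    also have "\<bar>\<dots>\<bar> \<le> (l * l2inner D f f + l2dist_sq D g c / l) / 2"
      unfolding l2dist_sq_def by (rule l2inner_abs_le_Young[OF f L2_diff[OF D g C(1)[OF c(1)]] l])
    also have "\<dots> \<le> l * ?A / 2"
      using c(2) l by (simp add: field_simps power2_eq_square)
    finally show ?thesis .
  qed
  show ?thesis
  proof (rule ccontr)
    assume "l2inner D f g \<noteq> 0"
    then have "\<bar>l2inner D f g\<bar> \<le> \<bar>l2inner D f g\<bar> / 2"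
      using bound[of "\<bar>l2inner D f g\<bar> / ?A"] A by simp
    with \<open>l2inner D f g \<noteq> 0\<close> show False by simp
  qed
qed

section \<open>Separability of \<open>L\<^sup>2\<close>\<close>

lemma l2inner_self_sum_scaleR_le:
  fixes e :: "nat \<Rightarrow> vfield"
  assumes D: "D \<in> sets lborel" and e: "\<And>k. L2 D (e k)" "\<And>k. l2inner D (e k) (e k) = 1"
    and d: "\<And>k. k < n \<Longrightarrow> \<bar>d k\<bar> \<le> \<theta>"
  shows "l2inner D (\<lambda>x. \<Sum>k<n. d k *\<^sub>R e k x) (\<lambda>x. \<Sum>k<n. d k *\<^sub>R e k x) \<le> \<theta>\<^sup>2 * n * n"
proof -
  have Ie: "set_integrable lborel D (\<lambda>x. (norm (e k x))\<^sup>2)" for k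
    using e L2_def by auto
  have "(norm (\<Sum>k<n. d k *\<^sub>R e k x))\<^sup>2 \<le> (\<Sum>k<n. norm (d k *\<^sub>R e k x))\<^sup>2" for x
    by (intro power_mono norm_sum norm_ge_zero)
  also have "\<dots> x \<le> (\<Sum>k<n. (norm (d k *\<^sub>R e k x))\<^sup>2) * n" for x
    using sum_squared_le_sum_of_squares[of "\<lambda>k. norm (d k *\<^sub>R e k x)" "{..<n}"] by simp
  also have "\<dots> x \<le> (\<Sum>k<n. \<theta>\<^sup>2 * (norm (e k x))\<^sup>2) * n" for x
  proof -
    have "\<bar>d k\<bar>\<^sup>2 \<le> \<theta>\<^sup>2" if "k < n" for k
      using d[OF that] by (meson abs_ge_zero order_trans power_mono)
    then show ?thesis
      by (auto simp: power_mult_distrib intro!: mult_right_mono sum_mono)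
  qed
  finally have pw: "(norm (\<Sum>k<n. d k *\<^sub>R e k x))\<^sup>2 \<le> \<theta>\<^sup>2 * n * (\<Sum>k<n. (norm (e k x))\<^sup>2)" for x
    by (simp add: sum_distrib_left mult_ac)
  have "l2inner D (\<lambda>x. \<Sum>k<n. d k *\<^sub>R e k x) (\<lambda>x. \<Sum>k<n. d k *\<^sub>R e k x)
      \<le> (LINT x:D|lborel. \<theta>\<^sup>2 * n * (\<Sum>k<n. (norm (e k x))\<^sup>2))"
    unfolding l2inner_self using L2_sum_scaleR[OF D e(1), where c=d and n=n] Ie pw
    by (intro set_integral_mono set_integrable_mult_right set_integrable_sum_real) (auto simp: L2_def)
  also have "\<dots> = \<theta>\<^sup>2 * n * (\<Sum>k<n. l2inner D (e k) (e k))"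
    unfolding l2inner_self by (simp add: set_integral_sum_real[OF _ Ie])
  also have "\<dots> = \<theta>\<^sup>2 * n * n"
    using e by simp
  finally show ?thesis .
qed

lemma exists_rat_dist_less:
  fixes x :: real
  assumes "0 < \<theta>"
  shows "\<exists>\<rho>::rat. \<bar>x - of_rat \<rho>\<bar> < \<theta>"
proof -
  obtain q where "q \<in> \<rat>" "x < q" "q < x + \<theta>"
    using Rats_dense_in_real[of x "x + \<theta>"] assms by auto
  then show ?thesis
    by (metis Rats_cases abs_diff_less_iff diff_less_eq less_trans)
qed

definition rat_comb :: "(nat \<Rightarrow> vfield) \<Rightarrow> rat list \<Rightarrow> vfield" where
  "rat_comb e r x = (\<Sum>k<length r. real_of_rat (r ! k) *\<^sub>R e k x)"

lemma L2_rat_comb: "D \<in> sets lborel \<Longrightarrow> (\<And>k. L2 D (e k)) \<Longrightarrow> L2 D (rat_comb e r)"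
  unfolding rat_comb_def[abs_def] by (rule L2_sum_scaleR)

lemma l2_onb_partial_sums_tendsto:
  assumes "l2_onb D e" "L2 D g"
  shows "(\<lambda>n. l2dist_sq D g (\<lambda>x. \<Sum>k<n. l2inner D g (e k) *\<^sub>R e k x)) \<longlonglongrightarrow> 0"
proof -
  let ?d = "\<lambda>n. l2dist_sq D g (\<lambda>x. \<Sum>k<n. l2inner D g (e k) *\<^sub>R e k x)"
  have "(\<lambda>n. sqrt (?d n)) \<longlonglongrightarrow> 0"
    using assms unfolding l2_onb_def l2norm_def fminus_def l2dist_sq_def by blast
  then have "(\<lambda>n. (sqrt (?d n))\<^sup>2) \<longlonglongrightarrow> 0\<^sup>2"
    by (intro tendsto_intros)
  then show ?thesis
    by (simp add: l2dist_sq_def l2inner_self_nonneg)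
qed

lemma rat_comb_approx:
  assumes D: "D \<in> sets lborel" and onb: "l2_onb D e" and g: "L2 D g" and \<eta>: "0 < \<eta>"
  obtains r where "l2dist_sq D g (rat_comb e r) < \<eta>"
proof -
  have e: "\<And>k. L2 D (e k)" "\<And>k. l2inner D (e k) (e k) = 1"
    using onb l2_onb_def by auto
  define c where "c k = l2inner D g (e k)" for k
  define S where "S n x = (\<Sum>k<n. c k *\<^sub>R e k x)" for n x
  have "\<forall>\<^sub>F n in sequentially. l2dist_sq D g (S n) < \<eta> / 4"
    using order_tendstoD(2)[OF l2_onb_partial_sums_tendsto[OF onb g], of "\<eta> / 4"] \<eta>
    unfolding S_def c_def by simp
  then obtain n where n: "l2dist_sq D g (S n) < \<eta> / 4"
    unfolding eventually_sequentially by blast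
  define \<theta> where "\<theta> = sqrt \<eta> / (2 * (n + 1))"
  have "\<exists>\<rho>::rat. \<bar>c k - of_rat \<rho>\<bar> < \<theta>" for k
    using \<eta> by (intro exists_rat_dist_less) (simp add: \<theta>_def)
  then obtain \<rho> where \<rho>: "\<And>k. \<bar>c k - of_rat (\<rho> k)\<bar> < \<theta>" by metis
  define r where "r = map \<rho> [0..<n]"
  have "S n x - rat_comb e r x = (\<Sum>k<n. (c k - of_rat (\<rho> k)) *\<^sub>R e k x)" for x
    unfolding rat_comb_def r_def S_def by (simp add: scaleR_diff_left sum_subtractf)
  then have "l2dist_sq D (S n) (rat_comb e r) \<le> \<theta>\<^sup>2 * n * n"
    unfolding l2dist_sq_def using \<rho>
    by (simp add: l2inner_self_sum_scaleR_le[OF D e] less_imp_le)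
  also have "\<dots> = \<eta> / 4 * (n / (n + 1))\<^sup>2"
    using \<eta> by (simp add: \<theta>_def power2_eq_square field_simps)
  also have "\<dots> < \<eta> / 4"
    using \<eta> by (simp add: power_less_one_iff divide_less_eq_1)
  finally have "l2dist_sq D (S n) (rat_comb e r) < \<eta> / 4" .
  moreover have "L2 D (S n)"
    unfolding S_def by (rule L2_sum_scaleR[OF D e(1)])
  moreover have "L2 D (rat_comb e r)"
    using D e(1) by (rule L2_rat_comb)
  ultimately have "l2dist_sq D g (rat_comb e r) < \<eta>"
    using l2dist_sq_triangle[OF D g, of "rat_comb e r" "S n"] n g by linarith
  then show ?thesis ..
qed

lemma l2_countable_dense_subset:
  assumes D: "D \<in> sets lborel" and onb: "l2_onb D e" and S: "\<And>g. g \<in> S \<Longrightarrow> L2 D g"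
  obtains C where "countable C" "C \<subseteq> S" "\<And>g \<eta>. g \<in> S \<Longrightarrow> 0 < \<eta> \<Longrightarrow> \<exists>c\<in>C. l2dist_sq D g c < \<eta>"
proof
  define near where "near i g \<longleftrightarrow> g \<in> S \<and> l2dist_sq D g (rat_comb e (fst i)) < inverse (real (Suc (snd i)))"
    for i :: "rat list \<times> nat" and g
  define C where "C = (\<lambda>i. SOME g. near i g) ` {i. \<exists>g. near i g}"
  have near: "near i (SOME g. near i g)" if "\<exists>g. near i g" for i
    using someI_ex[OF that] .
  show "countable C"
    unfolding C_def by (intro countable_image countableI_type)
  show "C \<subseteq> S"
    using near unfolding C_def near_def by auto
  show "\<exists>c\<in>C. l2dist_sq D g c < \<eta>" if g: "g \<in> S" and \<eta>: "0 < \<eta>" for g \<eta>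
  proof -
    have e: "\<And>k. L2 D (e k)"
      using onb l2_onb_def by auto
    obtain m where m: "inverse (real (Suc m)) < \<eta> / 4"
      using reals_Archimedean \<eta> by (metis zero_less_divide_iff zero_less_numeral)
    obtain r where r: "l2dist_sq D g (rat_comb e r) < inverse (real (Suc m))"
      using rat_comb_approx[OF D onb S[OF g], of "inverse (real (Suc m))"] by auto
    then have ex: "\<exists>g. near (r, m) g"
      using g unfolding near_def by auto
    define c where "c = (SOME g. near (r, m) g)"
    have "c \<in> C"
      unfolding C_def c_def using ex by (intro image_eqI[where x="(r, m)"]) auto
    moreover have c: "c \<in> S" "l2dist_sq D c (rat_comb e r) < inverse (real (Suc m))"
      using near[OF ex] unfolding c_def near_def by auto
    have "l2dist_sq D g c \<le> 2 * l2dist_sq D g (rat_comb e r) + 2 * l2dist_sq D (rat_comb e r) c"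
      using D e S[OF g] S[OF c(1)] by (intro l2dist_sq_triangle L2_rat_comb)
    then have "l2dist_sq D g c < \<eta>"
      using r c(2) m l2dist_sq_commute[of D c "rat_comb e r"] by linarith
    ultimately show ?thesis by blast
  qed
qed

section \<open>Noise increments are orthogonal to gradients\<close>

lemma l2inner_fscale_inverse_coefficient:
  assumes c: "coefficient D \<delta> c" "0 < \<delta>" and F: "L2 D F" and G: "L2 D G"
  shows "l2inner D (fscale c (fscale (\<lambda>x. 1 / c x) F)) G = l2inner D F G"
proof -
  have m2: "(\<lambda>x. indicator D x *\<^sub>R (F x \<bullet> G x)) \<in> borel_measurable lborel"
    using set_integrable_inner_L2[OF F G] unfolding set_integrable_def by (rule borel_measurable_integrable)
  have eq: "(\<lambda>x. indicator D x *\<^sub>R (fscale c (fscale (\<lambda>x. 1 / c x) F) x \<bullet> G x))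
      = (\<lambda>x. (c x * (1 / c x)) * (indicator D x *\<^sub>R (F x \<bullet> G x)))"
    by (auto simp: fun_eq_iff fscale_def)
  have m1: "(\<lambda>x. indicator D x *\<^sub>R (fscale c (fscale (\<lambda>x. 1 / c x) F) x \<bullet> G x)) \<in> borel_measurable lborel"
    unfolding eq using c(1) m2 unfolding coefficient_def
    by (intro borel_measurable_times borel_measurable_divide borel_measurable_const) auto
  obtain C where "AE x in lborel. x \<in> D \<longrightarrow> \<delta> \<le> c x \<and> c x \<le> C"
    using c(1) coefficient_def by blast
  then have "AE x in lborel. indicator D x *\<^sub>R (fscale c (fscale (\<lambda>x. 1 / c x) F) x \<bullet> G x)
      = indicator D x *\<^sub>R (F x \<bullet> G x)"
    by eventually_elim (use c(2) in \<open>auto simp: fscale_def indicator_def\<close>)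
  then show ?thesis
    unfolding l2inner_def set_lebesgue_integral_def by (rule integral_cong_AE[OF m1 m2])
qed

lemma covariance_opD:
  assumes "covariance_op D Q"
  shows covariance_op_L2: "\<And>f. L2 D f \<Longrightarrow> L2 D (Q f)"
    and covariance_op_l2_onb: "\<exists>e. l2_onb D e"
  using assms unfolding covariance_op_def by (elim conjE; blast)+

lemma Qop_V0_orthogonal_grad:
  assumes D: "D \<in> sets lborel" "bounded D" and \<delta>: "0 < \<delta>"
    and coeffs: "coefficient D \<delta> \<epsilon>" "coefficient D \<delta> \<mu>"
    and covs: "covariance_op D Qe" "covariance_op D Qm"
    and QV0: "\<forall>h. inV D h \<longrightarrow> inV0 D \<epsilon> \<mu> (Qop \<epsilon> \<mu> Qe Qm h)"
    and g: "L2 D g" and \<psi>: "test_fun D \<psi>"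
  shows "l2inner D (Qe g) (grad \<psi>) = 0" "l2inner D (Qm g) (grad \<psi>) = 0"
proof -
  have Q: "L2 D (Qe g)" "L2 D (Qm g)"
    using covariance_op_L2 covs g by blast+
  have "inV D (g, \<lambda>x. 0)" "inV D (\<lambda>x. 0, g)"
    using g L2_zero unfolding inV_def by simp_all
  then have "inV0 D \<epsilon> \<mu> (Qop \<epsilon> \<mu> Qe Qm (g, \<lambda>x. 0))" "inV0 D \<epsilon> \<mu> (Qop \<epsilon> \<mu> Qe Qm (\<lambda>x. 0, g))"
    using QV0 by blast+
  then have "div_distr D (fscale \<epsilon> (fscale (\<lambda>x. 1 / \<epsilon> x) (Qe g))) \<psi> = 0"
    "div_distr D (fscale \<mu> (fscale (\<lambda>x. 1 / \<mu> x) (Qm g))) \<psi> = 0"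
    unfolding inV0_def Qop_def by simp_all
  then show "l2inner D (Qe g) (grad \<psi>) = 0" "l2inner D (Qm g) (grad \<psi>) = 0"
    using \<psi> l2inner_fscale_inverse_coefficient[OF coeffs(1) \<delta> Q(1) L2_grad[OF \<psi> D]]
      l2inner_fscale_inverse_coefficient[OF coeffs(2) \<delta> Q(2) L2_grad[OF \<psi> D]]
    unfolding div_distr_def by simp_all
qed

lemma qwienerD:
  assumes "qwiener D M Q W"
  shows qwiener_L2: "\<And>t \<omega>. 0 \<le> t \<Longrightarrow> \<omega> \<in> space M \<Longrightarrow> L2 D (W t \<omega>)"
    and qwiener_increment_gaussian: "\<And>s t h. 0 \<le> s \<Longrightarrow> s \<le> t \<Longrightarrow> L2 D h \<Longrightarrow>
      centered_gaussian M (\<lambda>\<omega>. l2inner D (fminus (W t \<omega>) (W s \<omega>)) h) ((t - s) * l2inner D (Q h) h)"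
  using assms unfolding qwiener_def by blast+

lemma qwiener_increment_orthogonal_AE:
  assumes W: "qwiener D M Q W" and st: "0 \<le> s" "s \<le> t" and h: "L2 D h" "l2inner D (Q h) h = 0"
  shows "AE \<omega> in M. l2inner D (fminus (W t \<omega>) (W s \<omega>)) h = 0"
  using qwiener_increment_gaussian[OF W st h(1)] h(2) unfolding centered_gaussian_def by simp

lemma qwiener_increment_orthogonal_grad:
  assumes D: "D \<in> sets lborel" "bounded D" and onb: "l2_onb D e" and W: "qwiener D M Q W"
    and Q: "\<And>\<psi>. test_fun D \<psi> \<Longrightarrow> l2inner D (Q (grad \<psi>)) (grad \<psi>) = 0"
    and st: "0 \<le> s" "s \<le> t"
  shows "AE \<omega> in M. \<forall>\<psi>. test_fun D \<psi> \<longrightarrow> l2inner D (fminus (W t \<omega>) (W s \<omega>)) (grad \<psi>) = 0"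
proof -
  let ?G = "grad ` {\<psi>. test_fun D \<psi>}"
  have LG: "L2 D g" if "g \<in> ?G" for g
    using L2_grad D that by auto
  obtain C where C: "countable C" "C \<subseteq> ?G"
    and dense: "\<And>g \<eta>. g \<in> ?G \<Longrightarrow> 0 < \<eta> \<Longrightarrow> \<exists>c\<in>C. l2dist_sq D g c < \<eta>"
    using l2_countable_dense_subset[OF D(1) onb LG] by blast
  have "AE \<omega> in M. l2inner D (fminus (W t \<omega>) (W s \<omega>)) g = 0" if "g \<in> ?G" for g
  proof -
    from that obtain \<psi> where \<psi>: "test_fun D \<psi>" "g = grad \<psi>" by blast
    show ?thesis
      using qwiener_increment_orthogonal_AE[OF W st L2_grad[OF \<psi>(1) D] Q[OF \<psi>(1)]] \<psi>(2) by simp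
  qed
  with C have "AE \<omega> in M. \<forall>c\<in>C. l2inner D (fminus (W t \<omega>) (W s \<omega>)) c = 0"
    by (subst AE_ball_countable) auto
  then show ?thesis
    using AE_space
  proof eventually_elim
    case (elim \<omega>)
    have f: "L2 D (fminus (W t \<omega>) (W s \<omega>))"
      using qwiener_L2[OF W] st elim(2) unfolding fminus_def by (intro L2_diff[OF D(1)]) auto
    have LC: "\<And>c. c \<in> C \<Longrightarrow> L2 D c"
      using C(2) LG by blast
    show ?case
    proof (intro allI impI)
      fix \<psi> assume "test_fun D \<psi>"
      then have \<psi>: "grad \<psi> \<in> ?G" by blast
      show "l2inner D (fminus (W t \<omega>) (W s \<omega>)) (grad \<psi>) = 0"
      proof (rule l2inner_eq_0_if_orthogonal_dense[OF D(1) f LG[OF \<psi>] LC _ dense[OF \<psi>]])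
        fix c assume "c \<in> C"
        with elim(1) show "l2inner D (fminus (W t \<omega>) (W s \<omega>)) c = 0" by blast
      qed
    qed
  qed
qed

lemma midpoint_step_div_distr_eq:
  assumes step: "midpoint_step D \<epsilon> \<mu> \<tau> E0 H0 E1 H1 dWe dWm"
    and We: "\<forall>\<psi>. test_fun D \<psi> \<longrightarrow> l2inner D dWe (grad \<psi>) = 0"
    and Wm: "\<forall>\<psi>. test_fun D \<psi> \<longrightarrow> l2inner D dWm (grad \<psi>) = 0"
  shows "div_distr D (fscale \<epsilon> E1) = div_distr D (fscale \<epsilon> E0)
    \<and> div_distr D (fscale \<mu> H1) = div_distr D (fscale \<mu> H0)"
proof -
  have "l2inner D (fscale \<epsilon> E1) (grad \<psi>) = l2inner D (fscale \<epsilon> E0) (grad \<psi>)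
      \<and> l2inner D (fscale \<mu> H1) (grad \<psi>) = l2inner D (fscale \<mu> H0) (grad \<psi>)" if \<psi>: "test_fun D \<psi>" for \<psi>
  proof -
    have "curl (grad \<psi>) = (\<lambda>x. 0)"
      using \<psi> curl_grad_eq_0 test_fun_def by blast
    moreover have "l2inner D F (\<lambda>x. 0) = 0" for F
      by (simp add: l2inner_def)
    ultimately show ?thesis
      using step[unfolded midpoint_step_def, rule_format, OF test_vfield_grad[OF \<psi>]] We Wm \<psi> by simp
  qed
  then show ?thesis
    by (auto simp: fun_eq_iff div_distr_def)
qed

theorem proposition3p2:
  fixes a b :: "real^3" and D :: "(real^3) set"
    and \<epsilon> \<mu> :: "real^3 \<Rightarrow> real" and \<delta> \<tau> :: real and N :: nat
    and M :: "'w measure" and Qe Qm :: "vfield \<Rightarrow> vfield"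
    and We Wm :: "real \<Rightarrow> 'w \<Rightarrow> vfield"
    and E H :: "nat \<Rightarrow> 'w \<Rightarrow> vfield"
  assumes cuboid: "D = box a b" "\<forall>i. a $ i < b $ i"
    and coeffs: "0 < \<delta>" "coefficient D \<delta> \<epsilon>" "coefficient D \<delta> \<mu>"
    and prob: "prob_space M"
    and covs: "covariance_op D Qe" "covariance_op D Qm"
    and wiener: "qwiener D M Qe We" "qwiener D M Qm Wm" "indep_processes D M We Wm"
    and tau: "0 < \<tau>"
    and rv: "\<forall>n\<le>N. random_field D M (E n) \<and> random_field D M (H n)"
    and scheme: "\<forall>n<N. AE \<omega> in M.
       midpoint_step D \<epsilon> \<mu> \<tau> (E n \<omega>) (H n \<omega>) (E (Suc n) \<omega>) (H (Suc n) \<omega>)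
         (fminus (We (real (Suc n) * \<tau>) \<omega>) (We (real n * \<tau>) \<omega>))
         (fminus (Wm (real (Suc n) * \<tau>) \<omega>) (Wm (real n * \<tau>) \<omega>))"
    and QV0: "\<forall>h. inV D h \<longrightarrow> inV0 D \<epsilon> \<mu> (Qop \<epsilon> \<mu> Qe Qm h)"
  shows "\<forall>n<N. AE \<omega> in M.
           div_distr D (fscale \<epsilon> (E (Suc n) \<omega>)) = div_distr D (fscale \<epsilon> (E n \<omega>))
         \<and> div_distr D (fscale \<mu> (H (Suc n) \<omega>)) = div_distr D (fscale \<mu> (H n \<omega>))"
proof (intro allI impI)
  fix n assume "n < N"
  have D: "D \<in> sets lborel" "bounded D"
    using cuboid(1) by auto
  obtain e where onb: "l2_onb D e"
    using covariance_op_l2_onb[OF covs(1)] by blast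
  have Q: "l2inner D (Qe (grad \<psi>)) (grad \<psi>) = 0" "l2inner D (Qm (grad \<psi>)) (grad \<psi>) = 0"
    if "test_fun D \<psi>" for \<psi>
    using Qop_V0_orthogonal_grad[OF D coeffs covs QV0 L2_grad[OF that D] that] by auto
  have t: "0 \<le> real n * \<tau>" "real n * \<tau> \<le> real (Suc n) * \<tau>"
    using tau by auto
  have "AE \<omega> in M. \<forall>\<psi>. test_fun D \<psi> \<longrightarrow>
      l2inner D (fminus (We (real (Suc n) * \<tau>) \<omega>) (We (real n * \<tau>) \<omega>)) (grad \<psi>) = 0"
    using Q(1) by (rule qwiener_increment_orthogonal_grad[OF D onb wiener(1) _ t])
  moreover have "AE \<omega> in M. \<forall>\<psi>. test_fun D \<psi> \<longrightarrow>
      l2inner D (fminus (Wm (real (Suc n) * \<tau>) \<omega>) (Wm (real n * \<tau>) \<omega>)) (grad \<psi>) = 0"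
    using Q(2) by (rule qwiener_increment_orthogonal_grad[OF D onb wiener(2) _ t])
  ultimately show "AE \<omega> in M.
      div_distr D (fscale \<epsilon> (E (Suc n) \<omega>)) = div_distr D (fscale \<epsilon> (E n \<omega>))
    \<and> div_distr D (fscale \<mu> (H (Suc n) \<omega>)) = div_distr D (fscale \<mu> (H n \<omega>))"
    using scheme[rule_format, OF \<open>n < N\<close>] by eventually_elim (rule midpoint_step_div_distr_eq)
qed

end
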